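(* Let $\mathbb K$ be a field with $2\in\mathbb K^\times$, $A$ a unital commutative associative $\mathbb K$-algebra with unit $\mathbf 1$, $\mathfrak k$ a $\mathbb K$-Lie algebra, $\mathfrak g=A\otimes\mathfrak k$, and $\mathfrak z$ a $\mathbb K$-vector space. Let $f_1:\Lambda^2(A)\otimes S^2(\mathfrak k)\to\mathfrak z$, $f_2:A\otimes\Lambda^2(\mathfrak k)\to\mathfrak z$, $f_3:I_A\otimes\Lambda^2(\mathfrak k)\to\mathfrak z$ be linear. Then $f=f_1\circ p_1+f_2\circ p_2+f_3\circ p_3:\Lambda^2(\mathfrak g)\to\mathfrak z$ is a 2-cocycle if and only if: (a) $\tilde f_1(a,b)$ is an invariant symmetric bilinear map for all $a,b\in A$; (b) for every $t\in T_0(A)$, $\tilde f_1(t)(x,y)=0$ for all $x\in\mathfrak k$, $y\in\mathfrak k'$; (c) $d_{\mathfrak k}(\tilde f_2(a))=\Gamma(\tilde f_1(a,\mathbf 1))$ for every $a\in A$; (d) for every $c\in I_A$, $\tilde f_3(c)(x,y)=0$ for all $x\in\mathfrak k$, $y\in\mathfrak k'$.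
   Context: $\mathfrak g$ has bracket $[a\otimes x,a'\otimes x']=aa'\otimes[x,x']$; write $ax=a\otimes x$; $\mathfrak k'=[\mathfrak k,\mathfrak k]$. $\Lambda^2(V)$, $S^2(V)$ are identified with antisymmetric/symmetric tensors via $v\wedge w=\tfrac12(v\otimes w-w\otimes v)$, $v\vee w=\tfrac12(v\otimes w+w\otimes v)$. $I_A\subseteq S^2(A)$ is the kernel of the multiplication map $S^2(A)\to A$. The linear maps $p_1(ax\wedge by)=a\wedge b\otimes x\vee y\in\Lambda^2(A)\otimes S^2(\mathfrak k)$, $p_2(ax\wedge by)=ab\otimes x\wedge y\in A\otimes\Lambda^2(\mathfrak k)$, $p_3(ax\wedge by)=(a\vee b-ab\vee\mathbf 1)\otimes x\wedge y\in I_A\otimes\Lambda^2(\mathfrak k)$ together give a linear isomorphism of $\Lambda^2(\mathfrak g)$ onto the direct sum of the three spaces. A 2-cocycle is a linear map $f:\Lambda^2(\mathfrak g)\to\mathfrak z$ vanishing on $B_2(\mathfrak g)=\mathrm{im}\,\partial$, where $\partial(u\wedge v\wedge w)=[u,v]\wedge w+[v,w]\wedge u+[w,u]\wedge v$. Set $\tilde f_1(a,b)(x,y):=f_1(a\wedge b\otimes x\vee y)$ (extended linearly to $\Lambda^2(A)$), $\tilde f_2(a)(x,y):=f_2(a\otimes x\wedge y)$, $\tilde f_3(c)(x,y):=f_3(c\otimes x\wedge y)$. A symmetric bilinear $\kappa:\mathfrak k\times\mathfrak k\to\mathfrak z$ is invariant if $\kappa([x,y],z)=\kappa(x,[y,z])$;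 for such $\kappa$, $\Gamma(\kappa)(x,y,z):=\kappa([x,y],z)$. $T_0(A)\subseteq\Lambda^2(A)$ is the span of $ab\wedge c+bc\wedge a+ca\wedge b-abc\wedge\mathbf 1$, $a,b,c\in A$. For alternating bilinear $\eta:\mathfrak k\times\mathfrak k\to\mathfrak z$, $(d_{\mathfrak k}\eta)(x,y,z)=-\eta([x,y],z)+\eta([x,z],y)-\eta([y,z],x)$. *)

theory Defs
  imports Complex_Main
begin

definition bilinear_map ::
  "('f::field \<Rightarrow> 'u::ab_group_add \<Rightarrow> 'u) \<Rightarrow> ('f \<Rightarrow> 'v::ab_group_add \<Rightarrow> 'v)
   \<Rightarrow> ('f \<Rightarrow> 'w::ab_group_add \<Rightarrow> 'w) \<Rightarrow> ('u \<Rightarrow> 'v \<Rightarrow> 'w) \<Rightarrow> bool" where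
  "bilinear_map s1 s2 s3 B \<longleftrightarrow>
     (\<forall>x. Vector_Spaces.linear s2 s3 (B x)) \<and> (\<forall>y. Vector_Spaces.linear s1 s3 (\<lambda>x. B x y))"

definition linear_on ::
  "('f::field \<Rightarrow> 'u::ab_group_add \<Rightarrow> 'u) \<Rightarrow> ('f \<Rightarrow> 'w::ab_group_add \<Rightarrow> 'w)
   \<Rightarrow> 'u set \<Rightarrow> ('u \<Rightarrow> 'w) \<Rightarrow> bool" where
  "linear_on s1 s2 J f \<longleftrightarrow> module.subspace s1 J \<and>
     (\<forall>x\<in>J. \<forall>y\<in>J. f (x + y) = f x + f y) \<and> (\<forall>c. \<forall>x\<in>J. f (s1 c x) = s2 c (f x))"

text \<open>Since the target
  is a vector space over a field, universality for all bilinear maps is equivalent to: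
  t is bilinear, its image spans T, and every scalar-valued bilinear form on U \<times> V
  factors linearly through t (linear functionals separate points).\<close>
definition is_tensor_product ::
  "('f::field \<Rightarrow> 'u::ab_group_add \<Rightarrow> 'u) \<Rightarrow> ('f \<Rightarrow> 'v::ab_group_add \<Rightarrow> 'v)
   \<Rightarrow> ('f \<Rightarrow> 't::ab_group_add \<Rightarrow> 't) \<Rightarrow> ('u \<Rightarrow> 'v \<Rightarrow> 't) \<Rightarrow> bool" where
  "is_tensor_product s1 s2 s3 t \<longleftrightarrow>
     vector_space s1 \<and> vector_space s2 \<and> vector_space s3 \<and>
     bilinear_map s1 s2 s3 t \<and>
     module.span s3 {t x y | x y. True} = UNIV \<and>
     (\<forall>\<phi>::'u \<Rightarrow> 'v \<Rightarrow> 'f. bilinear_map s1 s2 (*) \<phi> \<longrightarrow>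
        (\<exists>L. Vector_Spaces.linear s3 (*) L \<and> (\<forall>x y. L (t x y) = \<phi> x y)))"

definition is_exterior_square ::
  "('f::field \<Rightarrow> 'u::ab_group_add \<Rightarrow> 'u) \<Rightarrow> ('f \<Rightarrow> 't::ab_group_add \<Rightarrow> 't)
   \<Rightarrow> ('u \<Rightarrow> 'u \<Rightarrow> 't) \<Rightarrow> bool" where
  "is_exterior_square s1 s3 w \<longleftrightarrow>
     vector_space s1 \<and> vector_space s3 \<and>
     bilinear_map s1 s1 s3 w \<and> (\<forall>x y. w y x = - w x y) \<and>
     module.span s3 {w x y | x y. True} = UNIV \<and>
     (\<forall>\<phi>::'u \<Rightarrow> 'u \<Rightarrow> 'f. bilinear_map s1 s1 (*) \<phi> \<longrightarrow> (\<forall>x y. \<phi> y x = - \<phi> x y) \<longrightarrow>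
        (\<exists>L. Vector_Spaces.linear s3 (*) L \<and> (\<forall>x y. L (w x y) = \<phi> x y)))"

definition is_symmetric_square ::
  "('f::field \<Rightarrow> 'u::ab_group_add \<Rightarrow> 'u) \<Rightarrow> ('f \<Rightarrow> 't::ab_group_add \<Rightarrow> 't)
   \<Rightarrow> ('u \<Rightarrow> 'u \<Rightarrow> 't) \<Rightarrow> bool" where
  "is_symmetric_square s1 s3 v \<longleftrightarrow>
     vector_space s1 \<and> vector_space s3 \<and>
     bilinear_map s1 s1 s3 v \<and> (\<forall>x y. v y x = v x y) \<and>
     module.span s3 {v x y | x y. True} = UNIV \<and>
     (\<forall>\<phi>::'u \<Rightarrow> 'u \<Rightarrow> 'f. bilinear_map s1 s1 (*) \<phi> \<longrightarrow> (\<forall>x y. \<phi> y x = \<phi> x y) \<longrightarrow>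
        (\<exists>L. Vector_Spaces.linear s3 (*) L \<and> (\<forall>x y. L (v x y) = \<phi> x y)))"

definition lie_algebra ::
  "('f::field \<Rightarrow> 'k::ab_group_add \<Rightarrow> 'k) \<Rightarrow> ('k \<Rightarrow> 'k \<Rightarrow> 'k) \<Rightarrow> bool" where
  "lie_algebra s br \<longleftrightarrow> vector_space s \<and> bilinear_map s s s br \<and> (\<forall>x. br x x = 0) \<and>
     (\<forall>x y z. br x (br y z) + br y (br z x) + br z (br x y) = 0)"

definition comm_algebra :: "('f::field \<Rightarrow> 'a::comm_ring_1 \<Rightarrow> 'a) \<Rightarrow> bool" where
  "comm_algebra s \<longleftrightarrow> vector_space s \<and> (\<forall>c a b. s c (a * b) = s c a * b)"

definition derived_algebra :: "('f::field \<Rightarrow> 'k::ab_group_add \<Rightarrow> 'k) \<Rightarrow> ('k \<Rightarrow> 'k \<Rightarrow> 'k) \<Rightarrow> 'k set" where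
  "derived_algebra s br = module.span s {br x y | x y. True}"

definition invariant_symmetric_bilinear ::
  "('f::field \<Rightarrow> 'k::ab_group_add \<Rightarrow> 'k) \<Rightarrow> ('f \<Rightarrow> 'z::ab_group_add \<Rightarrow> 'z)
   \<Rightarrow> ('k \<Rightarrow> 'k \<Rightarrow> 'k) \<Rightarrow> ('k \<Rightarrow> 'k \<Rightarrow> 'z) \<Rightarrow> bool" where
  "invariant_symmetric_bilinear sk sz br \<kappa> \<longleftrightarrow>
     bilinear_map sk sk sz \<kappa> \<and> (\<forall>x y. \<kappa> x y = \<kappa> y x) \<and>
     (\<forall>x y z. \<kappa> (br x y) z = \<kappa> x (br y z))"

definition Gamma :: "('k \<Rightarrow> 'k \<Rightarrow> 'k) \<Rightarrow> ('k \<Rightarrow> 'k \<Rightarrow> 'z) \<Rightarrow> 'k \<Rightarrow> 'k \<Rightarrow> 'k \<Rightarrow> 'z" where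
  "Gamma br \<kappa> x y z = \<kappa> (br x y) z"

definition d_k :: "('k \<Rightarrow> 'k \<Rightarrow> 'k) \<Rightarrow> ('k \<Rightarrow> 'k \<Rightarrow> 'z::ab_group_add) \<Rightarrow> 'k \<Rightarrow> 'k \<Rightarrow> 'k \<Rightarrow> 'z" where
  "d_k br \<eta> x y z = - \<eta> (br x y) z + \<eta> (br x z) y - \<eta> (br y z) x"

text \<open>B_2(g) = im \<partial>, where \<partial>(u\<and>v\<and>w) = [u,v]\<and>w + [v,w]\<and>u + [w,u]\<and>v; since \<Lambda>^3(g) is spanned
  by the u\<and>v\<and>w and \<partial> is linear, im \<partial> is the span of these elements.\<close>
definition B2 :: "('f::field \<Rightarrow> 'w::ab_group_add \<Rightarrow> 'w) \<Rightarrow> ('g \<Rightarrow> 'g \<Rightarrow> 'w) \<Rightarrow> ('g \<Rightarrow> 'g \<Rightarrow> 'g) \<Rightarrow> 'w set" where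
  "B2 sw wg bg = module.span sw
     {wg (bg u v) w + wg (bg v w) u + wg (bg w u) v | u v w. True}"

definition two_cocycle ::
  "('f::field \<Rightarrow> 'w::ab_group_add \<Rightarrow> 'w) \<Rightarrow> ('f \<Rightarrow> 'z::ab_group_add \<Rightarrow> 'z)
   \<Rightarrow> ('g \<Rightarrow> 'g \<Rightarrow> 'w) \<Rightarrow> ('g \<Rightarrow> 'g \<Rightarrow> 'g) \<Rightarrow> ('w \<Rightarrow> 'z) \<Rightarrow> bool" where
  "two_cocycle sw sz wg bg f \<longleftrightarrow> Vector_Spaces.linear sw sz f \<and> (\<forall>u\<in>B2 sw wg bg. f u = 0)"

definition T0 :: "('f::field \<Rightarrow> 'l::ab_group_add \<Rightarrow> 'l) \<Rightarrow> ('a::comm_ring_1 \<Rightarrow> 'a \<Rightarrow> 'l) \<Rightarrow> 'l set" where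
  "T0 sl wA = module.span sl
     {wA (a * b) c + wA (b * c) a + wA (c * a) b - wA (a * b * c) 1 | a b c. True}"

end

theory Submission
  imports Defs
begin

text \<open>
  A linear map on \<open>\<Lambda>\<^sup>2(\<g>)\<close> is a cocycle as soon as it kills the boundaries
  \<open>\<partial>(ax \<and> by \<and> cz)\<close>, since these span \<open>B\<^sub>2(\<g>)\<close>. Because \<open>[ax, by] = ab[x, y]\<close>, the value of
  \<open>f\<close> on such a boundary is a cyclic sum \<open>E(a, b, c; x, y, z)\<close> of values of
  \<open>f\<^sub>1(a \<and> b)\<close>, \<open>f\<^sub>2(a)\<close> and \<open>f\<^sub>3(a \<or> b - ab \<or> 1)\<close>. Specialising,
  \<open>E(a,1,1) + E(1,a,1)\<close> is twice the defect of (c), \<open>E(a,b,1) - E(b,a,1)\<close> is twice the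
  defect of invariance (a), and \<open>E(a,b,1) + E(b,a,1)\<close> yields (d); as \<open>2\<close> is invertible,
  these vanish. Given (a), (c) and (d), \<open>E(a,b,c)\<close> reduces to the \<open>T\<^sub>0\<close>-relation (b)
  evaluated at \<open>(x, [y, z])\<close>, which also gives the converse. The conditions on generators are
  equivalent to the stated ones since \<open>T\<^sub>0(A)\<close>, \<open>\<k>'\<close> and \<open>I\<^sub>A\<close> are spanned by the obvious
  elements; for \<open>I\<^sub>A\<close> because \<open>c - m(c) \<or> 1\<close> always lies in the span of the
  \<open>a \<or> b - ab \<or> 1\<close>.
\<close>

section \<open>Linear and bilinear maps\<close>

lemma linear_map_0: "Vector_Spaces.linear s1 s2 f \<Longrightarrow> f 0 = 0"
  by (simp add: linear_iff_module_hom module_hom.zero)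

lemma linear_map_add: "Vector_Spaces.linear s1 s2 f \<Longrightarrow> f (x + y) = f x + f y"
  by (simp add: linear_iff_module_hom module_hom.add)

lemma linear_map_neg: "Vector_Spaces.linear s1 s2 f \<Longrightarrow> f (- x) = - f x"
  by (simp add: linear_iff_module_hom module_hom.neg)

lemma linear_map_diff: "Vector_Spaces.linear s1 s2 f \<Longrightarrow> f (x - y) = f x - f y"
  by (simp add: linear_iff_module_hom module_hom.diff)

lemma linear_compose_fun:
  "Vector_Spaces.linear s1 s2 f \<Longrightarrow> Vector_Spaces.linear s2 s3 g \<Longrightarrow>
    Vector_Spaces.linear s1 s3 (\<lambda>x. g (f x))"
  using Vector_Spaces.linear_compose[of s1 s2 f s3 g] by (simp add: comp_def)

lemma linear_add_fun:
  "Vector_Spaces.linear s1 s2 f \<Longrightarrow> Vector_Spaces.linear s1 s2 g \<Longrightarrow>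
    Vector_Spaces.linear s1 s2 (\<lambda>x. f x + g x)"
  by (auto simp: Vector_Spaces.linear_iff module.scale_right_distrib module_iff_vector_space[symmetric])

lemma bilinear_map_linear_left: "bilinear_map s1 s2 s3 B \<Longrightarrow> Vector_Spaces.linear s1 s3 (\<lambda>x. B x y)"
  by (simp add: bilinear_map_def)

lemma bilinear_map_linear_right: "bilinear_map s1 s2 s3 B \<Longrightarrow> Vector_Spaces.linear s2 s3 (B x)"
  by (simp add: bilinear_map_def)

lemma linear_in_subspace_on_span:
  assumes L: "Vector_Spaces.linear s1 s2 L" and S: "module.subspace s2 S"
    and gen: "\<And>g. g \<in> G \<Longrightarrow> L g \<in> S" and u: "u \<in> module.span s1 G"
  shows "L u \<in> S"
proof -
  interpret Vector_Spaces.linear s1 s2 L by fact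
  have "L u \<in> vs2.span (L ` G)" using u by (simp add: span_image)
  also have "\<dots> \<subseteq> S" using S gen by (intro vs2.span_minimal) auto
  finally show ?thesis .
qed

lemma bilinear_in_subspace_on_spans:
  assumes L1: "\<And>v. Vector_Spaces.linear s1 s3 (\<lambda>u. B u v)"
    and L2: "\<And>u. Vector_Spaces.linear s2 s3 (B u)"
    and S: "module.subspace s3 S" and gen: "\<And>g h. g \<in> G \<Longrightarrow> h \<in> H \<Longrightarrow> B g h \<in> S"
    and u: "u \<in> module.span s1 G" and v: "v \<in> module.span s2 H"
  shows "B u v \<in> S"
proof -
  have "B u h \<in> S" if "h \<in> H" for h
    using linear_in_subspace_on_span[OF L1 S _ u] gen that by blast
  then show ?thesis using linear_in_subspace_on_span[OF L2 S _ v] by blast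
qed

lemma bilinear_vanishes_on_spans_iff:
  assumes L1: "\<And>v. Vector_Spaces.linear s1 s3 (\<lambda>u. B u v)"
    and L2: "\<And>u. Vector_Spaces.linear s2 s3 (B u)"
  shows "(\<forall>u \<in> module.span s1 G. \<forall>v \<in> module.span s2 H. B u v = 0) \<longleftrightarrow> (\<forall>g\<in>G. \<forall>h\<in>H. B g h = 0)"
proof -
  have m1: "module s1" and m2: "module s2" and m3: "module s3"
    using L1 L2 by (meson Vector_Spaces.linear_iff module_iff_vector_space)+
  show ?thesis
    using module.span_base[OF m1, of _ G] module.span_base[OF m2, of _ H]
      bilinear_in_subspace_on_spans[OF L1 L2 module.subspace_single_0[OF m3], of G H]
    by blast
qed

lemma linear_on_extends:
  assumes f: "linear_on s1 s2 S f" and "vector_space s1" "vector_space s2"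
  obtains F where "Vector_Spaces.linear s1 s2 F" "\<And>x. x \<in> S \<Longrightarrow> F x = f x"
proof -
  interpret vector_space_pair s1 s2 using assms(2,3) by (simp add: vector_space_pair_def)
  have S: "vs1.subspace S" and f_add: "\<And>x y. x \<in> S \<Longrightarrow> y \<in> S \<Longrightarrow> f (x + y) = f x + f y"
    and f_scale: "\<And>c x. x \<in> S \<Longrightarrow> f (s1 c x) = s2 c (f x)"
    using f by (auto simp: linear_on_def)
  obtain B where B: "B \<subseteq> S" "vs1.independent B" "S \<subseteq> vs1.span B"
    using vs1.maximal_independent_subset by blast
  obtain F where F: "Vector_Spaces.linear s1 s2 F" "\<And>x. x \<in> B \<Longrightarrow> F x = f x"
    using linear_independent_extend[OF B(2)] by blast
  have "f 0 = 0"
    using f_scale[of 0 0] vs1.subspace_0[OF S] by simp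
  then have "vs1.subspace {x \<in> S. F x = f x}"
    using S F(1) f_add f_scale
    by (auto simp: vs1.subspace_def linear_map_0 linear_map_add Vector_Spaces.linear_iff)
  then have "vs1.span B \<subseteq> {x \<in> S. F x = f x}"
    using B(1) F(2) by (intro vs1.span_minimal) auto
  with B(3) show ?thesis using that F(1) by blast
qed

section \<open>Cocycles on generators\<close>

definition lie_boundary :: "('g \<Rightarrow> 'g \<Rightarrow> 'w::ab_group_add) \<Rightarrow> ('g \<Rightarrow> 'g \<Rightarrow> 'g) \<Rightarrow> 'g \<Rightarrow> 'g \<Rightarrow> 'g \<Rightarrow> 'w" where
  "lie_boundary wg bg u v w = wg (bg u v) w + wg (bg v w) u + wg (bg w u) v"

lemma lie_boundary_rotate: "lie_boundary wg bg u v w = lie_boundary wg bg v w u"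
  by (simp add: lie_boundary_def algebra_simps)

lemma linear_lie_boundary:
  assumes wg: "bilinear_map sG sG sW wg" and bg: "bilinear_map sG sG sG bg"
  shows "Vector_Spaces.linear sG sW (\<lambda>u. lie_boundary wg bg u v w)"
  unfolding lie_boundary_def
  by (intro linear_add_fun linear_compose_fun[OF bilinear_map_linear_left[OF bg] bilinear_map_linear_left[OF wg]]
      bilinear_map_linear_right[OF wg]
      linear_compose_fun[OF bilinear_map_linear_right[OF bg] bilinear_map_linear_left[OF wg]])

lemma two_cocycle_iff_on_generators:
  assumes f: "Vector_Spaces.linear sW sZ f"
    and wg: "bilinear_map sG sG sW wg" and bg: "bilinear_map sG sG sG bg"
    and G: "module.span sG G = UNIV"
  shows "two_cocycle sW sZ wg bg f \<longleftrightarrow> (\<forall>u\<in>G. \<forall>v\<in>G. \<forall>w\<in>G. f (lie_boundary wg bg u v w) = 0)"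
    (is "_ \<longleftrightarrow> ?gen")
proof -
  have mW: "module sW" and Z0: "module.subspace sZ {0}"
    using f by (auto simp: Vector_Spaces.linear_iff module_iff_vector_space[symmetric] module.subspace_single_0)
  have fL1: "Vector_Spaces.linear sG sZ (\<lambda>u. f (lie_boundary wg bg u v w))" for v w
    by (rule linear_compose_fun[OF linear_lie_boundary[OF wg bg] f])
  \<comment> \<open>\<open>\<partial>\<close> is cyclically symmetric, so linearity in the first argument gives the others.\<close>
  have fL2: "Vector_Spaces.linear sG sZ (\<lambda>v. f (lie_boundary wg bg u v w))" for u w
    using fL1[of w u] by (simp add: lie_boundary_rotate[of wg bg u])
  have fL3: "Vector_Spaces.linear sG sZ (\<lambda>w. f (lie_boundary wg bg u v w))" for u v
    using fL1[of u v] by (simp add: lie_boundary_rotate[of wg bg u] lie_boundary_rotate[of wg bg v])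
  have everywhere: "f (lie_boundary wg bg u v w) = 0" if ?gen for u v w
  proof -
    have "f (lie_boundary wg bg u v k) \<in> {0}" if "k \<in> G" for k
      by (rule bilinear_in_subspace_on_spans[OF fL1 fL2 Z0, where G = G and H = G])
        (use \<open>?gen\<close> that G in auto)
    then have "f (lie_boundary wg bg u v w) \<in> {0}"
      by (rule linear_in_subspace_on_span[OF fL3 Z0]) (auto simp: G)
    then show ?thesis by simp
  qed
  have B2: "B2 sW wg bg = module.span sW {lie_boundary wg bg u v w | u v w. True}"
    by (simp add: B2_def lie_boundary_def)
  have "lie_boundary wg bg u v w \<in> B2 sW wg bg" for u v w
    unfolding B2 by (rule module.span_base[OF mW]) blast
  moreover have "f x \<in> {0}" if ?gen "x \<in> B2 sW wg bg" for x
    by (rule linear_in_subspace_on_span[OF f Z0 _ that(2)[unfolded B2]]) (auto simp: everywhere[OF that(1)])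
  ultimately show ?thesis
    using f by (auto simp: two_cocycle_def)
qed

lemma lie_algebra_antisym:
  assumes "lie_algebra s br"
  shows "br y x = - br x y"
proof -
  have br: "bilinear_map s s s br" and alt: "\<And>x. br x x = 0"
    using assms by (auto simp: lie_algebra_def)
  have "0 = br (x + y) (x + y)" by (rule alt[symmetric])
  also have "\<dots> = br x y + br y x"
    using alt[of x] alt[of y]
    by (simp add: linear_map_add[OF bilinear_map_linear_left[OF br]] linear_map_add[OF bilinear_map_linear_right[OF br]])
  finally show ?thesis by (simp add: eq_neg_iff_add_eq_0 add.commute)
qed

lemma vector_space_double_eq_0:
  fixes s :: "'f::field \<Rightarrow> 'v::ab_group_add \<Rightarrow> 'v" and v :: 'v
  assumes "vector_space s" and "(2::'f) \<noteq> 0" and "v + v = 0"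
  shows "v = 0"
proof -
  interpret vector_space s by fact
  have "s 2 v = v + v" using scale_left_distrib[of 1 1 v] by simp
  with assms(2,3) show ?thesis by simp
qed

lemma mult_kernel_eq_span:
  fixes sA :: "'f::field \<Rightarrow> 'a::comm_ring_1 \<Rightarrow> 'a"
  assumes v: "bilinear_map sA sA sS v" and v_span: "module.span sS {v a b | a b. True} = UNIV"
    and m: "Vector_Spaces.linear sS sA m" and m_v: "\<And>a b. m (v a b) = a * b"
  shows "{c. m c = 0} = module.span sS {v a b - v (a * b) 1 | a b. True}"
proof -
  have mS: "module sS"
    using m by (simp add: Vector_Spaces.linear_iff module_iff_vector_space)
  have gen_ker: "m (v a b - v (a * b) 1) = 0" for a b
    by (simp add: linear_map_diff[OF m] m_v)
  have L: "Vector_Spaces.linear sS sS (\<lambda>c. c - v (m c) 1)"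
    using linear_compose_fun[OF m bilinear_map_linear_left[OF v]] mS
    by (auto simp: Vector_Spaces.linear_iff module_iff_vector_space[symmetric] module.scale_right_diff_distrib)
  have "v a b - v (a * b) 1 \<in> module.span sS {v a b - v (a * b) 1 | a b. True}" for a b
    by (rule module.span_base[OF mS]) blast
  then have "g - v (m g) 1 \<in> module.span sS {v a b - v (a * b) 1 | a b. True}"
    if "g \<in> {v a b | a b. True}" for g
    using that by (auto simp: m_v)
  then have shifted: "c - v (m c) 1 \<in> module.span sS {v a b - v (a * b) 1 | a b. True}" for c
    using linear_in_subspace_on_span[OF L module.subspace_span[OF mS]] v_span by blast
  have "v 0 1 = 0"
    using linear_map_0[OF bilinear_map_linear_left[OF v]] by simp
  then have "c \<in> module.span sS {v a b - v (a * b) 1 | a b. True}" if "m c = 0" for c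
    using shifted[of c] that by simp
  then have "{c. m c = 0} \<subseteq> module.span sS {v a b - v (a * b) 1 | a b. True}"
    by blast
  moreover have "module.span sS {v a b - v (a * b) 1 | a b. True} \<subseteq> {c. m c = 0}"
  proof
    fix c assume c: "c \<in> module.span sS {v a b - v (a * b) 1 | a b. True}"
    have "module.subspace sA {0}"
      using m by (simp add: Vector_Spaces.linear_iff module_iff_vector_space[symmetric] module.subspace_single_0)
    then have "m c \<in> {0}"
      using linear_in_subspace_on_span[OF m _ _ c] gen_ker by blast
    then show "c \<in> {c. m c = 0}" by simp
  qed
  ultimately show ?thesis by (rule subset_antisym)
qed

section \<open>The cocycle identity in components\<close>

text \<open>
  The parameters \<open>\<beta> a b\<close>, \<open>\<eta> a\<close> and \<open>\<gamma> a b\<close> stand for \<open>f\<^sub>1(a \<and> b)\<close>,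
  \<open>f\<^sub>2(a)\<close> and \<open>f\<^sub>3(a \<or> b - ab \<or> 1)\<close>; then \<open>wedge_value a b x y\<close> is the value of the
  cochain on \<open>ax \<and> by\<close> and \<open>boundary_value a b c x y z\<close> its value on \<open>\<partial>(ax \<and> by \<and> cz)\<close>.
\<close>

locale cocycle_components =
  fixes sZ :: "'f::field \<Rightarrow> 'z::ab_group_add \<Rightarrow> 'z"
    and bk :: "'k::ab_group_add \<Rightarrow> 'k \<Rightarrow> 'k"
    and \<beta> :: "'a::comm_ring_1 \<Rightarrow> 'a \<Rightarrow> 'k \<Rightarrow> 'k \<Rightarrow> 'z"
    and \<eta> :: "'a \<Rightarrow> 'k \<Rightarrow> 'k \<Rightarrow> 'z"
    and \<gamma> :: "'a \<Rightarrow> 'a \<Rightarrow> 'k \<Rightarrow> 'k \<Rightarrow> 'z"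
  assumes z_vs: "vector_space sZ" and two_unit: "(2::'f) \<noteq> 0"
    and bk_antisym: "bk y x = - bk x y"
    and \<beta>_antisym: "\<beta> b a x y = - \<beta> a b x y"
    and \<beta>_sym: "\<beta> a b y x = \<beta> a b x y"
    and \<eta>_neg: "\<eta> a (- x) y = - \<eta> a x y"
    and \<gamma>_sym: "\<gamma> b a x y = \<gamma> a b x y"
    and \<gamma>_unit: "\<gamma> a 1 x y = 0"
    and \<gamma>_antisym: "\<gamma> a b y x = - \<gamma> a b x y"
begin

lemma double_eq_0: "(v::'z) + v = 0 \<Longrightarrow> v = 0"
  by (rule vector_space_double_eq_0[OF z_vs two_unit])

definition wedge_value :: "'a \<Rightarrow> 'a \<Rightarrow> 'k \<Rightarrow> 'k \<Rightarrow> 'z" where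
  "wedge_value a b x y = \<beta> a b x y + \<eta> (a * b) x y + \<gamma> a b x y"

definition boundary_value :: "'a \<Rightarrow> 'a \<Rightarrow> 'a \<Rightarrow> 'k \<Rightarrow> 'k \<Rightarrow> 'k \<Rightarrow> 'z" where
  "boundary_value a b c x y z =
     wedge_value (a * b) c (bk x y) z + wedge_value (b * c) a (bk y z) x + wedge_value (c * a) b (bk z x) y"

lemma d_k_cyclic: "d_k bk (\<eta> a) x y z = - (\<eta> a (bk x y) z + \<eta> a (bk y z) x + \<eta> a (bk z x) y)"
  using \<eta>_neg[of a "bk z x" y] by (simp add: d_k_def bk_antisym[of z x])

lemma boundary_value_unit_sum:
  "boundary_value a 1 1 x y z + boundary_value 1 a 1 x y z =
    (Gamma bk (\<beta> a 1) x y z - d_k bk (\<eta> a) x y z) + (Gamma bk (\<beta> a 1) x y z - d_k bk (\<eta> a) x y z)"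
  using \<beta>_antisym[of 1 a] \<gamma>_sym[of 1 a]
  by (simp add: boundary_value_def wedge_value_def Gamma_def d_k_cyclic \<gamma>_unit algebra_simps)

lemma boundary_value_swap_diff:
  "boundary_value a b 1 x y z - boundary_value b a 1 x y z =
    (\<beta> a b (bk z x) y - \<beta> a b (bk y z) x) + (\<beta> a b (bk z x) y - \<beta> a b (bk y z) x)"
  using \<beta>_antisym[of b a] \<gamma>_sym[of b a]
  by (simp add: boundary_value_def wedge_value_def \<gamma>_unit mult.commute[of b a] algebra_simps)

lemma boundary_value_swap_sum:
  "boundary_value a b 1 x y z + boundary_value b a 1 x y z =
    boundary_value (a * b) 1 1 x y z + boundary_value 1 (a * b) 1 x y z
    + ((\<gamma> a b (bk y z) x + \<gamma> a b (bk z x) y) + (\<gamma> a b (bk y z) x + \<gamma> a b (bk z x) y))"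
  using \<beta>_antisym[of b a] \<gamma>_sym[of b a] \<beta>_antisym[of 1 "a * b"] \<gamma>_sym[of 1 "a * b"]
  by (simp add: boundary_value_def wedge_value_def \<gamma>_unit mult.commute[of b a] algebra_simps)

lemma boundary_value_reduced:
  assumes inv: "\<And>a b x y z. \<beta> a b (bk x y) z = \<beta> a b x (bk y z)"
    and \<gamma>0: "\<And>a b x y z. \<gamma> a b x (bk y z) = 0"
  shows "boundary_value a b c x y z =
    \<beta> (a * b) c x (bk y z) + \<beta> (b * c) a x (bk y z) + \<beta> (c * a) b x (bk y z) - \<beta> (a * b * c) 1 x (bk y z)
    + (Gamma bk (\<beta> (a * b * c) 1) x y z - d_k bk (\<eta> (a * b * c)) x y z)"
proof -
  have \<beta>_cyclic: "\<beta> s t (bk y z) x = \<beta> s t x (bk y z)" "\<beta> s t (bk z x) y = \<beta> s t x (bk y z)" for s t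
    using inv[of s t z x y] inv[of s t x y z] \<beta>_sym[of s t] by metis+
  have \<gamma>_left: "\<gamma> s t (bk u v) w = 0" for s t u v w
    using \<gamma>0[of s t w u v] \<gamma>_antisym[of s t w] by simp
  have "b * c * a = a * b * c" "c * a * b = a * b * c"
    by (simp_all add: mult_ac)
  then show ?thesis
    by (simp add: boundary_value_def wedge_value_def Gamma_def d_k_cyclic \<beta>_cyclic \<gamma>_left
        inv[of _ _ x y z] algebra_simps)
qed

context
  assumes vanish: "\<And>a b c x y z. boundary_value a b c x y z = 0"
begin

lemma d_k_eq_Gamma_of_vanishing: "d_k bk (\<eta> a) = Gamma bk (\<beta> a 1)"
proof (intro ext)
  fix x y z
  have "Gamma bk (\<beta> a 1) x y z - d_k bk (\<eta> a) x y z = 0"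
    by (rule double_eq_0) (use boundary_value_unit_sum[of a x y z] in \<open>simp add: vanish\<close>)
  then show "d_k bk (\<eta> a) x y z = Gamma bk (\<beta> a 1) x y z" by simp
qed

lemma \<beta>_invariant_of_vanishing: "\<beta> a b (bk x y) z = \<beta> a b x (bk y z)"
proof -
  have "\<beta> a b (bk z x) y - \<beta> a b (bk y z) x = 0" for x y z
    by (rule double_eq_0) (use boundary_value_swap_diff[of a b x y z] in \<open>simp add: vanish\<close>)
  then have swap: "\<beta> a b (bk z x) y = \<beta> a b (bk y z) x" for x y z
    by simp
  show ?thesis
    using swap[of y z x] swap[of x y z] \<beta>_sym[of a b x "bk y z"] by simp
qed

lemma \<gamma>_vanishes_of_vanishing: "\<gamma> a b x (bk y z) = 0"
proof -
  have pair: "\<gamma> a b (bk y z) x + \<gamma> a b (bk z x) y = 0" for x y z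
    by (rule double_eq_0) (use boundary_value_swap_sum[of a b x y z] in \<open>simp add: vanish\<close>)
  have "\<gamma> a b (bk y z) x + \<gamma> a b (bk y z) x =
      (\<gamma> a b (bk y z) x + \<gamma> a b (bk z x) y) + (\<gamma> a b (bk x y) z + \<gamma> a b (bk y z) x)
      - (\<gamma> a b (bk z x) y + \<gamma> a b (bk x y) z)"
    by (simp add: algebra_simps)
  also have "\<dots> = 0"
    using pair[of x y z] pair[of y z x] pair[of z x y] by simp
  finally have "\<gamma> a b (bk y z) x = 0" by (rule double_eq_0)
  then show ?thesis
    using \<gamma>_antisym[of a b x] by simp
qed

lemma T0_relation_of_vanishing:
  "\<beta> (a * b) c x (bk y z) + \<beta> (b * c) a x (bk y z) + \<beta> (c * a) b x (bk y z) - \<beta> (a * b * c) 1 x (bk y z) = 0"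
  using boundary_value_reduced[OF \<beta>_invariant_of_vanishing \<gamma>_vanishes_of_vanishing, of a b c x y z]
  by (simp add: vanish d_k_eq_Gamma_of_vanishing)

end

lemma boundary_value_vanishes_iff:
  "(\<forall>a b c x y z. boundary_value a b c x y z = 0) \<longleftrightarrow>
    (\<forall>a b x y z. \<beta> a b (bk x y) z = \<beta> a b x (bk y z)) \<and>
    (\<forall>a b c x y z. \<beta> (a * b) c x (bk y z) + \<beta> (b * c) a x (bk y z) + \<beta> (c * a) b x (bk y z)
                      - \<beta> (a * b * c) 1 x (bk y z) = 0) \<and>
    (\<forall>a. d_k bk (\<eta> a) = Gamma bk (\<beta> a 1)) \<and>
    (\<forall>a b x y z. \<gamma> a b x (bk y z) = 0)"
  (is "?vanish \<longleftrightarrow> ?inv \<and> ?T0 \<and> ?d_k \<and> ?\<gamma>")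
proof
  assume ?vanish
  then have "\<And>a b c x y z. boundary_value a b c x y z = 0" by blast
  then show "?inv \<and> ?T0 \<and> ?d_k \<and> ?\<gamma>"
    by (intro conjI allI \<beta>_invariant_of_vanishing T0_relation_of_vanishing d_k_eq_Gamma_of_vanishing
        \<gamma>_vanishes_of_vanishing)
next
  assume conds: "?inv \<and> ?T0 \<and> ?d_k \<and> ?\<gamma>"
  show ?vanish
  proof (intro allI)
    fix a b c x y z
    show "boundary_value a b c x y z = 0"
      using boundary_value_reduced[of a b c x y z] conds by simp
  qed
qed

end

section \<open>Current algebras\<close>

locale current_algebra =
  fixes sA :: "'f::field \<Rightarrow> 'a::comm_ring_1 \<Rightarrow> 'a"
    and sK :: "'f \<Rightarrow> 'k::ab_group_add \<Rightarrow> 'k" and bk :: "'k \<Rightarrow> 'k \<Rightarrow> 'k"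
    and sZ :: "'f \<Rightarrow> 'z::ab_group_add \<Rightarrow> 'z"
    and sG :: "'f \<Rightarrow> 'g::ab_group_add \<Rightarrow> 'g" and tg :: "'a \<Rightarrow> 'k \<Rightarrow> 'g"
    and bg :: "'g \<Rightarrow> 'g \<Rightarrow> 'g"
    and sW :: "'f \<Rightarrow> 'w::ab_group_add \<Rightarrow> 'w" and wg :: "'g \<Rightarrow> 'g \<Rightarrow> 'w"
    and sLA :: "'f \<Rightarrow> 'la::ab_group_add \<Rightarrow> 'la" and wA :: "'a \<Rightarrow> 'a \<Rightarrow> 'la"
    and sSK :: "'f \<Rightarrow> 'sk::ab_group_add \<Rightarrow> 'sk" and vK :: "'k \<Rightarrow> 'k \<Rightarrow> 'sk"
    and sLK :: "'f \<Rightarrow> 'lk::ab_group_add \<Rightarrow> 'lk" and wK :: "'k \<Rightarrow> 'k \<Rightarrow> 'lk"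
    and sSA :: "'f \<Rightarrow> 'sa::ab_group_add \<Rightarrow> 'sa" and vA :: "'a \<Rightarrow> 'a \<Rightarrow> 'sa"
    and mA :: "'sa \<Rightarrow> 'a"
    and sT1 :: "'f \<Rightarrow> 't1::ab_group_add \<Rightarrow> 't1" and tens1 :: "'la \<Rightarrow> 'sk \<Rightarrow> 't1"
    and sT2 :: "'f \<Rightarrow> 't2::ab_group_add \<Rightarrow> 't2" and tens2 :: "'a \<Rightarrow> 'lk \<Rightarrow> 't2"
    and sT3 :: "'f \<Rightarrow> 't3::ab_group_add \<Rightarrow> 't3" and tens3 :: "'sa \<Rightarrow> 'lk \<Rightarrow> 't3"
    and p1 :: "'w \<Rightarrow> 't1" and p2 :: "'w \<Rightarrow> 't2" and p3 :: "'w \<Rightarrow> 't3"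
  assumes two_unit: "(2::'f) \<noteq> 0"
    and k_lie: "lie_algebra sK bk"
    and z_vs: "vector_space sZ"
    and g_tensor: "is_tensor_product sA sK sG tg"
    and bg_bil: "bilinear_map sG sG sG bg"
    and bg_tg: "\<And>a b x y. bg (tg a x) (tg b y) = tg (a * b) (bk x y)"
    and W_ext: "is_exterior_square sG sW wg"
    and LA_ext: "is_exterior_square sA sLA wA"
    and SK_sym: "is_symmetric_square sK sSK vK"
    and LK_ext: "is_exterior_square sK sLK wK"
    and SA_sym: "is_symmetric_square sA sSA vA"
    and mA_lin: "Vector_Spaces.linear sSA sA mA"
    and mA_vA: "\<And>a b. mA (vA a b) = a * b"
    and T1_tensor: "is_tensor_product sLA sSK sT1 tens1"
    and T2_tensor: "is_tensor_product sA sLK sT2 tens2"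
    and T3_tensor: "is_tensor_product sSA sLK sT3 tens3"
    and p1_lin: "Vector_Spaces.linear sW sT1 p1"
    and p1_def: "\<And>a b x y. p1 (wg (tg a x) (tg b y)) = tens1 (wA a b) (vK x y)"
    and p2_lin: "Vector_Spaces.linear sW sT2 p2"
    and p2_def: "\<And>a b x y. p2 (wg (tg a x) (tg b y)) = tens2 (a * b) (wK x y)"
    and p3_lin: "Vector_Spaces.linear sW sT3 p3"
    and p3_def: "\<And>a b x y. p3 (wg (tg a x) (tg b y)) = tens3 (vA a b - vA (a * b) 1) (wK x y)"
begin

lemma tg_span: "module.span sG {tg a x | a x. True} = UNIV"
  using g_tensor unfolding is_tensor_product_def by blast

lemma wg_bilinear: "bilinear_map sG sG sW wg"
  and wg_span: "module.span sW {wg u v | u v. True} = UNIV"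
  using W_ext unfolding is_exterior_square_def by blast+

lemma wA_antisym: "wA b a = - wA a b"
  using LA_ext unfolding is_exterior_square_def by blast

lemma vK_bilinear: "bilinear_map sK sK sSK vK"
  and vK_sym: "vK y x = vK x y"
  using SK_sym unfolding is_symmetric_square_def by blast+

lemma wK_bilinear: "bilinear_map sK sK sLK wK"
  and wK_antisym: "wK y x = - wK x y"
  using LK_ext unfolding is_exterior_square_def by blast+

lemma vA_bilinear: "bilinear_map sA sA sSA vA"
  and vA_sym: "vA b a = vA a b"
  and vA_span: "module.span sSA {vA a b | a b. True} = UNIV"
  using SA_sym unfolding is_symmetric_square_def by blast+

lemma tens1_bilinear: "bilinear_map sLA sSK sT1 tens1"
  using T1_tensor unfolding is_tensor_product_def by blast

lemma tens2_bilinear: "bilinear_map sA sLK sT2 tens2"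
  using T2_tensor unfolding is_tensor_product_def by blast

lemma tens3_bilinear: "bilinear_map sSA sLK sT3 tens3"
  and T3_vs: "vector_space sT3"
  using T3_tensor unfolding is_tensor_product_def by blast+

lemma p3_in_kernel_tensors: "p3 u \<in> module.span sT3 {tens3 c w | c w. mA c = 0}"
proof -
  have mT3: "module sT3"
    using T3_vs by (simp add: module_iff_vector_space)
  let ?S = "module.span sT3 {tens3 c w | c w. mA c = 0}"
  have S: "module.subspace sT3 ?S"
    by (rule module.subspace_span[OF mT3])
  have "p3 (wg (tg a x) (tg b y)) \<in> ?S" for a b x y
    unfolding p3_def
    by (rule module.span_base[OF mT3]) (auto simp: linear_map_diff[OF mA_lin] mA_vA)
  then have gen: "p3 (wg g h) \<in> ?S" if "g \<in> {tg a x | a x. True}" "h \<in> {tg a x | a x. True}" for g h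
    using that by blast
  have "p3 (wg g h) \<in> ?S" for g h
    by (rule bilinear_in_subspace_on_spans[where G = "{tg a x | a x. True}" and H = "{tg a x | a x. True}", OF
          linear_compose_fun[OF bilinear_map_linear_left[OF wg_bilinear] p3_lin]
          linear_compose_fun[OF bilinear_map_linear_right[OF wg_bilinear] p3_lin] S gen])
      (simp_all only: tg_span UNIV_I)
  then have "p3 u \<in> ?S" if "u \<in> {wg g h | g h. True}" for u
    using that by blast
  moreover have "u \<in> module.span sW {wg g h | g h. True}"
    using wg_span by simp
  ultimately show ?thesis
    by (rule linear_in_subspace_on_span[OF p3_lin S])
qed

text \<open>
  \<open>f\<^sub>3\<close> is only linear on \<open>I\<^sub>A \<otimes> \<Lambda>\<^sup>2(\<k>)\<close>; any linear extension to \<open>S\<^sup>2(A) \<otimes> \<Lambda>\<^sup>2(\<k>)\<close> serves,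
  since the image of \<open>p\<^sub>3\<close> lies in that subspace.
\<close>

lemma kernel_tensor_extension:
  assumes "linear_on sT3 sZ (module.span sT3 {tens3 c w | c w. mA c = 0}) f3"
  obtains F3 where "Vector_Spaces.linear sT3 sZ F3" "\<And>u. F3 (p3 u) = f3 (p3 u)"
    "\<And>c w. mA c = 0 \<Longrightarrow> F3 (tens3 c w) = f3 (tens3 c w)"
proof -
  obtain F3 where "Vector_Spaces.linear sT3 sZ F3"
    and F3: "\<And>u. u \<in> module.span sT3 {tens3 c w | c w. mA c = 0} \<Longrightarrow> F3 u = f3 u"
    using linear_on_extends[OF assms T3_vs z_vs] by blast
  moreover have "tens3 c w \<in> module.span sT3 {tens3 c w | c w. mA c = 0}" if "mA c = 0" for c w
    using T3_vs that by (intro module.span_base) (auto simp: module_iff_vector_space)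
  ultimately show ?thesis
    using that p3_in_kernel_tensors by blast
qed

end

locale current_algebra_cochain = current_algebra +
  fixes f1 f2 F3
  assumes f1_lin: "Vector_Spaces.linear sT1 sZ f1"
    and f2_lin: "Vector_Spaces.linear sT2 sZ f2"
    and F3_lin: "Vector_Spaces.linear sT3 sZ F3"
begin

definition f1_tilde where
  "f1_tilde a b x y = f1 (tens1 (wA a b) (vK x y))"

definition f2_tilde where
  "f2_tilde a x y = f2 (tens2 a (wK x y))"

definition f3_tilde where
  "f3_tilde a b x y = F3 (tens3 (vA a b - vA (a * b) 1) (wK x y))"

definition cochain where
  "cochain u = f1 (p1 u) + f2 (p2 u) + F3 (p3 u)"

lemma f1_tens1_linear: "Vector_Spaces.linear sLA sZ (\<lambda>t. f1 (tens1 t s))"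
  by (rule linear_compose_fun[OF bilinear_map_linear_left[OF tens1_bilinear] f1_lin])

lemma f1_vK_linear_left: "Vector_Spaces.linear sK sZ (\<lambda>x. f1 (tens1 t (vK x y)))"
  by (intro linear_compose_fun[OF bilinear_map_linear_left[OF vK_bilinear]]
      linear_compose_fun[OF bilinear_map_linear_right[OF tens1_bilinear] f1_lin])

lemma f1_vK_linear_right: "Vector_Spaces.linear sK sZ (\<lambda>y. f1 (tens1 t (vK x y)))"
  by (intro linear_compose_fun[OF bilinear_map_linear_right[OF vK_bilinear]]
      linear_compose_fun[OF bilinear_map_linear_right[OF tens1_bilinear] f1_lin])

lemma f2_wK_linear_left: "Vector_Spaces.linear sK sZ (\<lambda>x. f2 (tens2 a (wK x y)))"
  by (intro linear_compose_fun[OF bilinear_map_linear_left[OF wK_bilinear]]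
      linear_compose_fun[OF bilinear_map_linear_right[OF tens2_bilinear] f2_lin])

lemma F3_tens3_linear: "Vector_Spaces.linear sSA sZ (\<lambda>c. F3 (tens3 c w))"
  by (rule linear_compose_fun[OF bilinear_map_linear_left[OF tens3_bilinear] F3_lin])

lemma F3_wK_linear_right: "Vector_Spaces.linear sK sZ (\<lambda>y. F3 (tens3 c (wK x y)))"
  by (intro linear_compose_fun[OF bilinear_map_linear_right[OF wK_bilinear]]
      linear_compose_fun[OF bilinear_map_linear_right[OF tens3_bilinear] F3_lin])

sublocale cocycle_components sZ bk f1_tilde f2_tilde f3_tilde
proof (rule cocycle_components.intro[OF z_vs two_unit])
  show "bk y x = - bk x y" for x y
    by (rule lie_algebra_antisym[OF k_lie])
  show "f1_tilde b a x y = - f1_tilde a b x y" for a b x y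
    by (simp add: f1_tilde_def wA_antisym[of b a] linear_map_neg[OF f1_tens1_linear])
  show "f1_tilde a b y x = f1_tilde a b x y" for a b x y
    by (simp add: f1_tilde_def vK_sym)
  show "f2_tilde a (- x) y = - f2_tilde a x y" for a x y
    using linear_map_neg[OF f2_wK_linear_left] by (simp add: f2_tilde_def)
  show "f3_tilde b a x y = f3_tilde a b x y" for a b x y
    by (simp add: f3_tilde_def vA_sym mult.commute)
  show "f3_tilde a 1 x y = 0" for a x y
    using linear_map_0[OF F3_tens3_linear] by (simp add: f3_tilde_def)
  show "f3_tilde a b y x = - f3_tilde a b x y" for a b x y
    using linear_map_neg[OF linear_compose_fun[OF bilinear_map_linear_right[OF tens3_bilinear] F3_lin]]
    by (simp add: f3_tilde_def wK_antisym[of y x])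
qed

lemma cochain_linear: "Vector_Spaces.linear sW sZ cochain"
  unfolding cochain_def
  by (intro linear_add_fun linear_compose_fun[OF p1_lin f1_lin] linear_compose_fun[OF p2_lin f2_lin]
      linear_compose_fun[OF p3_lin F3_lin])

lemma cochain_wedge: "cochain (wg (tg a x) (tg b y)) = wedge_value a b x y"
  by (simp add: cochain_def p1_def p2_def p3_def wedge_value_def f1_tilde_def f2_tilde_def f3_tilde_def)

lemma cochain_lie_boundary:
  "cochain (lie_boundary wg bg (tg a x) (tg b y) (tg c z)) = boundary_value a b c x y z"
  by (simp add: lie_boundary_def bg_tg linear_map_add[OF cochain_linear] cochain_wedge boundary_value_def)

lemma two_cocycle_iff_boundary_value_vanishes:
  "two_cocycle sW sZ wg bg cochain \<longleftrightarrow> (\<forall>a b c x y z. boundary_value a b c x y z = 0)"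
proof -
  have "two_cocycle sW sZ wg bg cochain \<longleftrightarrow> (\<forall>u \<in> {tg a x | a x. True}. \<forall>v \<in> {tg a x | a x. True}.
      \<forall>w \<in> {tg a x | a x. True}. cochain (lie_boundary wg bg u v w) = 0)"
    by (rule two_cocycle_iff_on_generators[OF cochain_linear wg_bilinear bg_bil tg_span])
  also have "\<dots> \<longleftrightarrow> (\<forall>a b c x y z. cochain (lie_boundary wg bg (tg a x) (tg b y) (tg c z)) = 0)"
    by blast
  finally show ?thesis
    by (simp only: cochain_lie_boundary)
qed

lemma invariant_symmetric_bilinear_iff:
  "(\<forall>a b. invariant_symmetric_bilinear sK sZ bk (\<lambda>x y. f1 (tens1 (wA a b) (vK x y)))) \<longleftrightarrow>
    (\<forall>a b x y z. f1_tilde a b (bk x y) z = f1_tilde a b x (bk y z))"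
  using f1_vK_linear_left f1_vK_linear_right vK_sym
  by (auto simp: invariant_symmetric_bilinear_def bilinear_map_def f1_tilde_def)

lemma T0_condition_iff:
  "(\<forall>t \<in> T0 sLA wA. \<forall>x y. y \<in> derived_algebra sK bk \<longrightarrow> f1 (tens1 t (vK x y)) = 0) \<longleftrightarrow>
    (\<forall>a b c x y z. f1_tilde (a * b) c x (bk y z) + f1_tilde (b * c) a x (bk y z)
       + f1_tilde (c * a) b x (bk y z) - f1_tilde (a * b * c) 1 x (bk y z) = 0)"
proof -
  have expand: "f1 (tens1 (wA (a * b) c + wA (b * c) a + wA (c * a) b - wA (a * b * c) 1) s) =
      f1 (tens1 (wA (a * b) c) s) + f1 (tens1 (wA (b * c) a) s) + f1 (tens1 (wA (c * a) b) s)
      - f1 (tens1 (wA (a * b * c) 1) s)" for a b c s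
    by (simp add: linear_map_add[OF f1_tens1_linear] linear_map_diff[OF f1_tens1_linear])
  have "(\<forall>t \<in> T0 sLA wA. \<forall>y \<in> derived_algebra sK bk. f1 (tens1 t (vK x y)) = 0) \<longleftrightarrow>
    (\<forall>t \<in> {wA (a * b) c + wA (b * c) a + wA (c * a) b - wA (a * b * c) 1 | a b c. True}.
       \<forall>y \<in> {bk y z | y z. True}. f1 (tens1 t (vK x y)) = 0)" for x
    unfolding T0_def derived_algebra_def
    by (rule bilinear_vanishes_on_spans_iff[where B = "\<lambda>t y. f1 (tens1 t (vK x y))",
          OF f1_tens1_linear f1_vK_linear_right])
  also have "\<dots> x \<longleftrightarrow> (\<forall>a b c y z. f1 (tens1 (wA (a * b) c + wA (b * c) a + wA (c * a) b - wA (a * b * c) 1)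
       (vK x (bk y z))) = 0)" for x
    by blast
  finally show ?thesis
    by (simp only: expand f1_tilde_def) blast
qed

lemma kernel_condition_iff:
  "(\<forall>c. mA c = 0 \<longrightarrow> (\<forall>x y. y \<in> derived_algebra sK bk \<longrightarrow> F3 (tens3 c (wK x y)) = 0)) \<longleftrightarrow>
    (\<forall>a b x y z. f3_tilde a b x (bk y z) = 0)"
proof -
  have ker: "{c. mA c = 0} = module.span sSA {vA a b - vA (a * b) 1 | a b. True}"
    by (rule mult_kernel_eq_span[OF vA_bilinear vA_span mA_lin mA_vA])
  have "(\<forall>c \<in> {c. mA c = 0}. \<forall>y \<in> derived_algebra sK bk. F3 (tens3 c (wK x y)) = 0) \<longleftrightarrow>
    (\<forall>a b y z. f3_tilde a b x (bk y z) = 0)" for x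
    unfolding ker derived_algebra_def
    by (subst bilinear_vanishes_on_spans_iff[where B = "\<lambda>c y. F3 (tens3 c (wK x y))",
          OF F3_tens3_linear F3_wK_linear_right])
      (auto simp: f3_tilde_def)
  then show ?thesis by blast
qed

end

theorem theorem3p1:
  fixes sA :: "'f::field \<Rightarrow> 'a::comm_ring_1 \<Rightarrow> 'a"
    and sK :: "'f \<Rightarrow> 'k::ab_group_add \<Rightarrow> 'k" and bk :: "'k \<Rightarrow> 'k \<Rightarrow> 'k"
    and sZ :: "'f \<Rightarrow> 'z::ab_group_add \<Rightarrow> 'z"
    and sG :: "'f \<Rightarrow> 'g::ab_group_add \<Rightarrow> 'g" and tg :: "'a \<Rightarrow> 'k \<Rightarrow> 'g"
    and bg :: "'g \<Rightarrow> 'g \<Rightarrow> 'g"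
    and sW :: "'f \<Rightarrow> 'w::ab_group_add \<Rightarrow> 'w" and wg :: "'g \<Rightarrow> 'g \<Rightarrow> 'w"
    and sLA :: "'f \<Rightarrow> 'la::ab_group_add \<Rightarrow> 'la" and wA :: "'a \<Rightarrow> 'a \<Rightarrow> 'la"
    and sSK :: "'f \<Rightarrow> 'sk::ab_group_add \<Rightarrow> 'sk" and vK :: "'k \<Rightarrow> 'k \<Rightarrow> 'sk"
    and sLK :: "'f \<Rightarrow> 'lk::ab_group_add \<Rightarrow> 'lk" and wK :: "'k \<Rightarrow> 'k \<Rightarrow> 'lk"
    and sSA :: "'f \<Rightarrow> 'sa::ab_group_add \<Rightarrow> 'sa" and vA :: "'a \<Rightarrow> 'a \<Rightarrow> 'sa"
    and mA :: "'sa \<Rightarrow> 'a"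
    and sT1 :: "'f \<Rightarrow> 't1::ab_group_add \<Rightarrow> 't1" and tens1 :: "'la \<Rightarrow> 'sk \<Rightarrow> 't1"
    and sT2 :: "'f \<Rightarrow> 't2::ab_group_add \<Rightarrow> 't2" and tens2 :: "'a \<Rightarrow> 'lk \<Rightarrow> 't2"
    and sT3 :: "'f \<Rightarrow> 't3::ab_group_add \<Rightarrow> 't3" and tens3 :: "'sa \<Rightarrow> 'lk \<Rightarrow> 't3"
    and p1 :: "'w \<Rightarrow> 't1" and p2 :: "'w \<Rightarrow> 't2" and p3 :: "'w \<Rightarrow> 't3"
    and f1 :: "'t1 \<Rightarrow> 'z" and f2 :: "'t2 \<Rightarrow> 'z" and f3 :: "'t3 \<Rightarrow> 'z"
  assumes two_unit: "(2::'f) \<noteq> 0"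
    and A_alg: "comm_algebra sA"
    and k_lie: "lie_algebra sK bk"
    and z_vs: "vector_space sZ"
    \<comment> \<open>g = A \<otimes> k with bracket [a x, a' x'] = a a' [x,x']\<close>
    and g_tensor: "is_tensor_product sA sK sG tg"
    and bg_bil: "bilinear_map sG sG sG bg"
    and bg_tg: "\<And>a b x y. bg (tg a x) (tg b y) = tg (a * b) (bk x y)"
    \<comment> \<open>the exterior and symmetric squares\<close>
    and W_ext: "is_exterior_square sG sW wg"
    and LA_ext: "is_exterior_square sA sLA wA"
    and SK_sym: "is_symmetric_square sK sSK vK"
    and LK_ext: "is_exterior_square sK sLK wK"
    and SA_sym: "is_symmetric_square sA sSA vA"
    \<comment> \<open>multiplication map S^2(A) \<rightarrow> A; I_A is its kernel\<close>
    and mA_lin: "Vector_Spaces.linear sSA sA mA"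
    and mA_vA: "\<And>a b. mA (vA a b) = a * b"
    \<comment> \<open>tensor products \<Lambda>^2(A)\<otimes>S^2(k), A\<otimes>\<Lambda>^2(k), S^2(A)\<otimes>\<Lambda>^2(k) (the latter containing I_A\<otimes>\<Lambda>^2(k))\<close>
    and T1_tensor: "is_tensor_product sLA sSK sT1 tens1"
    and T2_tensor: "is_tensor_product sA sLK sT2 tens2"
    and T3_tensor: "is_tensor_product sSA sLK sT3 tens3"
    \<comment> \<open>the maps p1, p2, p3\<close>
    and p1_lin: "Vector_Spaces.linear sW sT1 p1"
    and p1_def: "\<And>a b x y. p1 (wg (tg a x) (tg b y)) = tens1 (wA a b) (vK x y)"
    and p2_lin: "Vector_Spaces.linear sW sT2 p2"
    and p2_def: "\<And>a b x y. p2 (wg (tg a x) (tg b y)) = tens2 (a * b) (wK x y)"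
    and p3_lin: "Vector_Spaces.linear sW sT3 p3"
    and p3_def: "\<And>a b x y. p3 (wg (tg a x) (tg b y)) = tens3 (vA a b - vA (a * b) 1) (wK x y)"
    \<comment> \<open>f1, f2 linear; f3 linear on I_A \<otimes> \<Lambda>^2(k)\<close>
    and f1_lin: "Vector_Spaces.linear sT1 sZ f1"
    and f2_lin: "Vector_Spaces.linear sT2 sZ f2"
    and f3_lin: "linear_on sT3 sZ (module.span sT3 {tens3 c w | c w. mA c = 0}) f3"
  shows "two_cocycle sW sZ wg bg (\<lambda>u. f1 (p1 u) + f2 (p2 u) + f3 (p3 u)) \<longleftrightarrow>
     ((\<forall>a b. invariant_symmetric_bilinear sK sZ bk (\<lambda>x y. f1 (tens1 (wA a b) (vK x y))))
      \<and> (\<forall>t \<in> T0 sLA wA. \<forall>x y. y \<in> derived_algebra sK bk \<longrightarrow> f1 (tens1 t (vK x y)) = 0)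
      \<and> (\<forall>a. d_k bk (\<lambda>x y. f2 (tens2 a (wK x y))) =
              Gamma bk (\<lambda>x y. f1 (tens1 (wA a 1) (vK x y))))
      \<and> (\<forall>c. mA c = 0 \<longrightarrow> (\<forall>x y. y \<in> derived_algebra sK bk \<longrightarrow> f3 (tens3 c (wK x y)) = 0)))"
proof -
  interpret A: current_algebra sA sK bk sZ sG tg bg sW wg sLA wA sSK vK sLK wK sSA vA mA
      sT1 tens1 sT2 tens2 sT3 tens3 p1 p2 p3
    by (intro current_algebra.intro; rule assms)
  obtain F3 where F3_lin: "Vector_Spaces.linear sT3 sZ F3" and F3_p3: "\<And>u. F3 (p3 u) = f3 (p3 u)"
    and F3_ker: "\<And>c w. mA c = 0 \<Longrightarrow> F3 (tens3 c w) = f3 (tens3 c w)"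
    using A.kernel_tensor_extension[OF f3_lin] by blast
  interpret C: current_algebra_cochain sA sK bk sZ sG tg bg sW wg sLA wA sSK vK sLK wK sSA vA mA
      sT1 tens1 sT2 tens2 sT3 tens3 p1 p2 p3 f1 f2 F3
    by (intro current_algebra_cochain.intro A.current_algebra_axioms current_algebra_cochain_axioms.intro
        f1_lin f2_lin F3_lin)
  have "(\<lambda>u. f1 (p1 u) + f2 (p2 u) + f3 (p3 u)) = C.cochain"
    by (simp add: fun_eq_iff C.cochain_def F3_p3)
  then have "two_cocycle sW sZ wg bg (\<lambda>u. f1 (p1 u) + f2 (p2 u) + f3 (p3 u)) \<longleftrightarrow>
      (\<forall>a b c x y z. C.boundary_value a b c x y z = 0)"
    by (simp only: C.two_cocycle_iff_boundary_value_vanishes)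
  also note C.boundary_value_vanishes_iff
  finally show ?thesis
    unfolding C.invariant_symmetric_bilinear_iff[symmetric] C.T0_condition_iff[symmetric]
      C.kernel_condition_iff[symmetric]
    by (simp add: F3_ker C.f1_tilde_def[abs_def] C.f2_tilde_def[abs_def])
qed

end
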